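(* Let $K$ be a number field, $\gamma\in\mathcal O_K$ a primitive element with monic minimal polynomial $f\in\mathbb Z[x]$, and let $I = a\mathcal O_K + \alpha\mathcal O_K$ with $a$ a positive integer and $\alpha\in\mathcal O_K$. Assume $\gcd(a, [\mathcal O_K:\mathbb Z[\gamma]]) = 1$. Let $g\in\mathbb Q[x]$ satisfy $g(\gamma) = \alpha$ and have coefficients whose denominators are coprime to $a$, and let $\bar g,\bar f$ be the images in $(\mathbb Z/a\mathbb Z)[x]$. Then $\min(I)$ is the unique positive divisor $m$ of $a$ such that $\mathrm{Rres}_{\mathbb Z/a\mathbb Z}(\bar g, \bar f)$ is the ideal generated by $m \bmod a$ in $\mathbb Z/a\mathbb Z$.
   Context: $\mathcal O_K$ is the ring of integers of $K$. The minimum $\min(I)$ is the positive integer with $I\cap\mathbb Z = \min(I)\mathbb Z$. For a commutative ring $S$ and $p,q \in S[x]$, $\mathrm{Rres}_S(p,q) = (p,q)\cap S$, where $(p,q)$ is the ideal of $S[x]$ generated by $p,q$. *)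

theory Defs
  imports "HOL-Computational_Algebra.Computational_Algebra" "HOL-Number_Theory.Cong"
begin

text \<open>Everything lives inside the complex numbers: the number field is K = Q(gamma)
  for an algebraic integer gamma.\<close>

definition algebraic_integer :: "complex \<Rightarrow> bool" where
  "algebraic_integer x \<longleftrightarrow> (\<exists>p :: int poly. lead_coeff p = 1 \<and> poly (map_poly of_int p) x = 0)"

text \<open>K = Q(gamma) (gamma algebraic, so Q[gamma] = Q(gamma)).\<close>
definition num_field :: "complex \<Rightarrow> complex set" where
  "num_field \<gamma> = {poly (map_poly of_rat p) \<gamma> | p :: rat poly. True}"

definition ring_of_integers :: "complex \<Rightarrow> complex set" where
  "ring_of_integers \<gamma> = {x \<in> num_field \<gamma>. algebraic_integer x}"

definition int_order :: "complex \<Rightarrow> complex set" where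
  "int_order \<gamma> = {poly (map_poly of_int p) \<gamma> | p :: int poly. True}"

definition order_index :: "complex \<Rightarrow> nat" where
  "order_index \<gamma> = card ((\<lambda>x. {x + y | y. y \<in> int_order \<gamma>}) ` ring_of_integers \<gamma>)"

definition two_gen_ideal :: "complex \<Rightarrow> int \<Rightarrow> complex \<Rightarrow> complex set" where
  "two_gen_ideal \<gamma> a \<alpha> =
     {of_int a * x + \<alpha> * y | x y. x \<in> ring_of_integers \<gamma> \<and> y \<in> ring_of_integers \<gamma>}"

definition ideal_min :: "complex set \<Rightarrow> int" where
  "ideal_min I = (THE m. m > 0 \<and> {n :: int. of_int n \<in> I} = {k * m | k. True})"

text \<open>G is an integer lift of the reduction of g modulo a: for g_i = r/s (lowest terms,
  s coprime to a), G_i * s = r (mod a), i.e. G_i reduces to r * s^{-1} in Z/aZ.\<close>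
definition reduction_lift :: "int \<Rightarrow> rat poly \<Rightarrow> int poly \<Rightarrow> bool" where
  "reduction_lift a g G \<longleftrightarrow>
     (\<forall>i. [coeff G i * snd (quotient_of (coeff g i)) = fst (quotient_of (coeff g i))] (mod a))"

text \<open>Integers c whose class mod a lies in Rres_{Z/aZ}(gbar, fbar) = (gbar, fbar) \<inter> Z/aZ,
  with polynomials over Z/aZ represented by integer polynomials up to coefficientwise
  congruence mod a.\<close>
definition rres_mod :: "int \<Rightarrow> rat poly \<Rightarrow> int poly \<Rightarrow> int set" where
  "rres_mod a g f = {c. \<exists>G u v. reduction_lift a g G \<and>
      (\<forall>i. [coeff (u * G + v * f) i = coeff [:c:] i] (mod a))}"

definition gen_ideal_mod :: "int \<Rightarrow> int \<Rightarrow> int set" where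
  "gen_ideal_mod a m = {c. \<exists>k. [c = k * m] (mod a)}"

end

theory Submission
  imports Defs "Jordan_Normal_Form.Char_Poly" "HOL-Computational_Algebra.Field_as_Ring"
begin

text \<open>
  \<open>I \<inter> \<int>\<close> is an ideal of \<open>\<int>\<close> containing \<open>a\<close>, hence equal to \<open>m\<int>\<close> with \<open>m\<close> dividing
  \<open>a\<close>, and it suffices to show that \<open>I \<inter> \<int>\<close> consists exactly of the integers \<open>c\<close> with
  \<open>c \<equiv> u G + v f\<close> modulo \<open>a\<close>, where \<open>G\<close> is an integer lift of \<open>g mod a\<close>.
  Since the denominators of \<open>g\<close> are invertible modulo \<open>a\<close>, \<open>G(\<gamma>) = \<alpha> + a\<beta>\<close> with
  \<open>\<beta> \<in> \<O>\<^sub>K\<close>; evaluating \<open>u G + v f\<close> at \<open>\<gamma>\<close> therefore lands in \<open>I\<close>.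
  Conversely, if \<open>c = a x + \<alpha> y\<close>, the index \<open>n\<close> of \<open>\<int>[\<gamma>]\<close> in \<open>\<O>\<^sub>K\<close> satisfies
  \<open>n \<O>\<^sub>K \<subseteq> \<int>[\<gamma>]\<close>, which turns \<open>n\<^sup>2 c\<close> into the value at \<open>\<gamma>\<close> of
  \<open>n Y G - a E\<close> for integer polynomials \<open>Y\<close>, \<open>E\<close>. The minimal polynomial \<open>f\<close>
  divides the difference, and as \<open>n\<close> is a unit modulo \<open>a\<close> this exhibits \<open>c\<close> in the
  ideal \<open>(g, f)\<close> modulo \<open>a\<close>.

  That \<open>\<O>\<^sub>K\<close> is a ring follows from the determinant trick: multiplication by \<open>x + y\<close>
  and by \<open>x y\<close> preserves the \<open>\<int>\<close>-span of the finitely many monomials \<open>x\<^sup>i y\<^sup>j\<close>, so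
  both are eigenvalues of integer matrices.
\<close>

section \<open>Algebraic integers form a ring\<close>

lemma algebraic_integer_iff_algebraic_int: "algebraic_integer x \<longleftrightarrow> algebraic_int x"
  unfolding algebraic_integer_def algebraic_int_altdef_ipoly by blast

lemma algebraic_int_if_int_mat_eigenvalue:
  fixes M :: "int mat" and v :: "'a :: field vec"
  assumes M: "M \<in> carrier_mat n n" and v: "v \<in> carrier_vec n" "v \<noteq> 0\<^sub>v n"
    and eigen: "map_mat of_int M *\<^sub>v v = x \<cdot>\<^sub>v v"
  shows "algebraic_int x"
proof -
  have M': "map_mat of_int M \<in> carrier_mat n n" using M by simp
  have "eigenvalue (map_mat of_int M) x"
    unfolding eigenvalue_def eigenvector_def using M v eigen by auto
  hence "poly (char_poly (map_mat of_int M)) x = 0"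
    using eigenvalue_root_char_poly[OF M'] by blast
  hence "poly (map_poly of_int (char_poly M)) x = 0"
    by (simp add: of_int_hom.char_poly_hom[OF M])
  moreover have "lead_coeff (map_poly (of_int :: int \<Rightarrow> 'a) (char_poly M)) = 1"
    using degree_monic_char_poly[OF M] by (subst lead_coeff_map_poly_nz) simp_all
  moreover have "\<forall>i. coeff (map_poly of_int (char_poly M)) i \<in> (\<int> :: 'a set)"
    by (simp add: coeff_map_poly)
  ultimately show ?thesis
    by (intro algebraic_int.intros[of "map_poly of_int (char_poly M)"]) simp_all
qed

definition int_span :: "('i \<Rightarrow> 'a :: comm_ring_1) \<Rightarrow> 'i set \<Rightarrow> 'a set" where
  "int_span W I = range (\<lambda>c. \<Sum>i\<in>I. of_int (c i) * W i)"

lemma int_spanI: "s = (\<Sum>i\<in>I. of_int (c i) * W i) \<Longrightarrow> s \<in> int_span W I"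
  unfolding int_span_def by blast

lemma int_spanE:
  assumes "s \<in> int_span W I"
  obtains c where "s = (\<Sum>i\<in>I. of_int (c i) * W i)"
  using assms unfolding int_span_def by blast

lemma int_span_empty [simp]: "int_span W {} = {0}"
  unfolding int_span_def by simp

lemma int_span_add:
  assumes "s \<in> int_span W I" "t \<in> int_span W I"
  shows "s + t \<in> int_span W I"
proof -
  obtain c d where "s = (\<Sum>i\<in>I. of_int (c i) * W i)" "t = (\<Sum>i\<in>I. of_int (d i) * W i)"
    using assms by (elim int_spanE)
  hence "s + t = (\<Sum>i\<in>I. of_int (c i + d i) * W i)"
    by (simp add: sum.distrib distrib_right)
  thus ?thesis by (rule int_spanI)
qed

lemma int_span_scale:
  assumes "s \<in> int_span W I"
  shows "of_int k * s \<in> int_span W I"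
proof -
  obtain c where "s = (\<Sum>i\<in>I. of_int (c i) * W i)"
    using assms by (elim int_spanE)
  hence "of_int k * s = (\<Sum>i\<in>I. of_int (k * c i) * W i)"
    by (simp add: sum_distrib_left mult.assoc)
  thus ?thesis by (rule int_spanI)
qed

lemma int_span_sum:
  assumes "finite A" "\<And>j. j \<in> A \<Longrightarrow> f j \<in> int_span W I"
  shows "sum f A \<in> int_span W I"
  using assms
proof (induction A rule: finite_induct)
  case empty
  have "0 = (\<Sum>i\<in>I. of_int 0 * W i)" by simp
  thus ?case unfolding sum.empty by (rule int_spanI)
qed (simp add: int_span_add)

lemma int_span_generator:
  assumes "finite I" "i \<in> I"
  shows "W i \<in> int_span W I"
proof (rule int_spanI)
  have "(\<Sum>j\<in>I. of_int (if j = i then 1 else 0) * W j) = (\<Sum>j\<in>I. if j = i then W j else 0)"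
    by (rule sum.cong) simp_all
  thus "W i = (\<Sum>j\<in>I. of_int (if j = i then 1 else 0) * W j)"
    using assms by simp
qed

lemma int_span_mult_closed:
  assumes "\<And>i. i \<in> I \<Longrightarrow> z * W i \<in> int_span W I" "s \<in> int_span W I"
  shows "z * s \<in> int_span W I"
proof (cases "finite I")
  case True
  obtain c where "s = (\<Sum>i\<in>I. of_int (c i) * W i)"
    using assms(2) by (elim int_spanE)
  hence "z * s = (\<Sum>i\<in>I. of_int (c i) * (z * W i))"
    by (simp add: sum_distrib_left algebra_simps)
  also have "\<dots> \<in> int_span W I"
    using True assms(1) by (intro int_span_sum int_span_scale)
  finally show ?thesis .
next
  case False
  thus ?thesis using assms(2) unfolding int_span_def by simp
qed

lemma int_span_times:
  assumes "s \<in> int_span V I" "t \<in> int_span W J"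
  shows "s * t \<in> int_span (\<lambda>(i, j). V i * W j) (I \<times> J)"
proof -
  obtain c d where "s = (\<Sum>i\<in>I. of_int (c i) * V i)" "t = (\<Sum>j\<in>J. of_int (d j) * W j)"
    using assms by (elim int_spanE)
  hence "s * t = (\<Sum>i\<in>I. \<Sum>j\<in>J. of_int (c i) * V i * (of_int (d j) * W j))"
    by (simp add: sum_product)
  also have "\<dots> = (\<Sum>(i, j)\<in>I \<times> J. of_int (c i) * V i * (of_int (d j) * W j))"
    by (rule sum.cartesian_product)
  also have "\<dots> = (\<Sum>k\<in>I \<times> J. of_int ((\<lambda>(i, j). c i * d j) k) * (\<lambda>(i, j). V i * W j) k)"
    by (rule sum.cong) (auto simp: algebra_simps)
  finally show ?thesis by (rule int_spanI)
qed

lemma power_in_int_span_if_monic_root: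
  fixes x :: "'a :: {comm_ring_1, ring_char_0}"
  assumes "lead_coeff p = 1" "poly (of_int_poly p) x = 0"
  shows "x ^ k \<in> int_span (\<lambda>i. x ^ i) {..<degree p}"
proof (induction k)
  case 0
  have "degree p \<noteq> 0"
  proof
    assume "degree p = 0"
    hence "p = 1" using assms(1) by (metis degree_0_id one_pCons)
    thus False using assms(2) by simp
  qed
  thus ?case by (intro int_span_generator) auto
next
  case (Suc k)
  have "x * x ^ i \<in> int_span (\<lambda>i. x ^ i) {..<degree p}" if "i \<in> {..<degree p}" for i
  proof (cases "Suc i < degree p")
    case True
    thus ?thesis using int_span_generator[of "{..<degree p}" "Suc i" "\<lambda>i. x ^ i"] by simp
  next
    case False
    have "degree (of_int_poly p :: 'a poly) = degree p"
      by (rule degree_map_poly) simp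
    hence "poly (of_int_poly p) x = (\<Sum>l<Suc (degree p). of_int (coeff p l) * x ^ l)"
      by (simp only: poly_altdef lessThan_Suc_atMost of_int_hom.coeff_map_poly_hom)
    also have "\<dots> = (\<Sum>l<degree p. of_int (coeff p l) * x ^ l) + x ^ degree p"
      using assms(1) by simp
    finally have "poly (of_int_poly p) x = (\<Sum>l<degree p. of_int (coeff p l) * x ^ l) + x ^ degree p" .
    moreover have "x * x ^ i = x ^ degree p"
      using False that by (cases "degree p = Suc i") auto
    ultimately have "x * x ^ i = (\<Sum>l<degree p. of_int (- coeff p l) * x ^ l)"
      using assms(2) by (simp add: sum_negf eq_neg_iff_add_eq_0 add.commute)
    also have "\<dots> \<in> int_span (\<lambda>i. x ^ i) {..<degree p}"
      by (intro int_span_sum int_span_scale int_span_generator) auto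
    finally show ?thesis .
  qed
  hence "x * x ^ k \<in> int_span (\<lambda>i. x ^ i) {..<degree p}"
    using Suc.IH by (rule int_span_mult_closed)
  thus ?case by simp
qed

lemma algebraic_int_if_int_span_stable:
  fixes W :: "'i \<Rightarrow> 'a :: field"
  assumes I: "finite I" "i0 \<in> I" "W i0 \<noteq> 0"
    and stable: "\<And>i. i \<in> I \<Longrightarrow> z * W i \<in> int_span W I"
  shows "algebraic_int z"
proof -
  define n where "n = card I"
  obtain h where h: "bij_betw h {0..<n} I"
    using ex_bij_betw_nat_finite[OF I(1)] unfolding n_def by blast
  have "\<exists>c. z * W i = (\<Sum>j\<in>I. of_int (c j) * W j)" if "i \<in> I" for i
    using stable[OF that] by (rule int_spanE) blast
  then obtain C where C: "\<And>i. i \<in> I \<Longrightarrow> z * W i = (\<Sum>j\<in>I. of_int (C i j) * W j)"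
    by metis
  define M :: "int mat" where "M = mat n n (\<lambda>(k, l). C (h k) (h l))"
  define v :: "'a vec" where "v = vec n (\<lambda>k. W (h k))"
  have hI: "h k \<in> I" if "k < n" for k using h that unfolding bij_betw_def by auto
  obtain k0 where k0: "k0 < n" "h k0 = i0" using h I(2) unfolding bij_betw_def by force
  have "v \<noteq> 0\<^sub>v n"
  proof
    assume "v = 0\<^sub>v n"
    hence "v $ k0 = 0" using k0 by simp
    thus False using k0 I(3) unfolding v_def by simp
  qed
  moreover have "map_mat of_int M *\<^sub>v v = z \<cdot>\<^sub>v v"
  proof (rule eq_vecI)
    fix k assume "k < dim_vec (z \<cdot>\<^sub>v v)"
    hence k: "k < n" unfolding v_def by simp
    have "(map_mat of_int M *\<^sub>v v) $ k = (\<Sum>l\<in>{0..<n}. of_int (C (h k) (h l)) * W (h l))"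
      using k unfolding M_def v_def by (simp add: scalar_prod_def)
    also have "\<dots> = (\<Sum>j\<in>I. of_int (C (h k) j) * W j)"
      using sum.reindex_bij_betw[OF h, of "\<lambda>j. of_int (C (h k) j) * W j"] by simp
    also have "\<dots> = (z \<cdot>\<^sub>v v) $ k" using C[OF hI[OF k]] k unfolding v_def by simp
    finally show "(map_mat of_int M *\<^sub>v v) $ k = (z \<cdot>\<^sub>v v) $ k" .
  qed (simp add: M_def v_def)
  ultimately show ?thesis
    by (intro algebraic_int_if_int_mat_eigenvalue[of M n v]) (simp_all add: M_def v_def)
qed

lemma algebraic_int_add_mult:
  fixes x y :: "'a :: field_char_0"
  assumes "algebraic_int x" "algebraic_int y"
  shows "algebraic_int (x + y)" "algebraic_int (x * y)"
proof -
  obtain p q where p: "poly (of_int_poly p) x = 0" "lead_coeff p = 1"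
    and q: "poly (of_int_poly q) y = 0" "lead_coeff q = 1"
    using assms unfolding algebraic_int_altdef_ipoly by blast
  define I where "I = {..<degree p} \<times> {..<degree q}"
  define W where "W = (\<lambda>(i, j). x ^ i * y ^ j)"
  have monomial: "x ^ i * y ^ j \<in> int_span W I" for i j
    using int_span_times[OF power_in_int_span_if_monic_root[OF p(2,1)]
        power_in_int_span_if_monic_root[OF q(2,1)]]
    unfolding W_def I_def .
  have "1 \<in> int_span W I" using monomial[of 0 0] by simp
  hence "I \<noteq> {}" by auto
  hence I: "finite I" "(0, 0) \<in> I" "W (0, 0) \<noteq> 0" unfolding I_def W_def by auto
  show "algebraic_int (x + y)"
  proof (rule algebraic_int_if_int_span_stable[of I "(0, 0)" W, OF I])
    fix k assume "k \<in> I"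
    obtain i j where "k = (i, j)" by fastforce
    hence "(x + y) * W k = x ^ Suc i * y ^ j + x ^ i * y ^ Suc j"
      unfolding W_def by (simp add: algebra_simps)
    also have "\<dots> \<in> int_span W I" by (rule int_span_add[OF monomial monomial])
    finally show "(x + y) * W k \<in> int_span W I" .
  qed
  show "algebraic_int (x * y)"
  proof (rule algebraic_int_if_int_span_stable[of I "(0, 0)" W, OF I])
    fix k assume "k \<in> I"
    obtain i j where "k = (i, j)" by fastforce
    hence "(x * y) * W k = x ^ Suc i * y ^ Suc j"
      unfolding W_def by (simp add: algebra_simps)
    also have "\<dots> \<in> int_span W I" by (rule monomial)
    finally show "(x * y) * W k \<in> int_span W I" .
  qed
qed

section \<open>The ring of integers and the order \<open>\<int>[\<gamma>]\<close>\<close>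

interpretation of_rat_poly_hom: map_poly_idom_hom of_rat ..

lemma num_field_closed:
  assumes "x \<in> num_field \<gamma>" "y \<in> num_field \<gamma>"
  shows "x + y \<in> num_field \<gamma>" "x - y \<in> num_field \<gamma>" "x * y \<in> num_field \<gamma>"
proof -
  obtain p q where "x = poly (map_poly of_rat p) \<gamma>" "y = poly (map_poly of_rat q) \<gamma>"
    using assms unfolding num_field_def by blast
  thus "x + y \<in> num_field \<gamma>" "x - y \<in> num_field \<gamma>" "x * y \<in> num_field \<gamma>"
    unfolding num_field_def
    by (auto intro: exI[of _ "p + q"] exI[of _ "p - q"] exI[of _ "p * q"] simp: hom_distribs)
qed

lemma num_field_of_int: "of_int c \<in> num_field \<gamma>"
  unfolding num_field_def by (auto intro!: exI[of _ "[:of_int c:]"] simp: hom_distribs)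

lemma num_field_generator: "\<gamma> \<in> num_field \<gamma>"
  unfolding num_field_def by (auto intro!: exI[of _ "[:0, 1:]"])

lemma ring_of_integers_closed:
  assumes "x \<in> ring_of_integers \<gamma>" "y \<in> ring_of_integers \<gamma>"
  shows "x + y \<in> ring_of_integers \<gamma>" "x - y \<in> ring_of_integers \<gamma>"
    "x * y \<in> ring_of_integers \<gamma>"
  using assms num_field_closed algebraic_int_add_mult[of x y] algebraic_int_add_mult(1)[of x "- y"]
  unfolding ring_of_integers_def algebraic_integer_iff_algebraic_int by auto

lemma ring_of_integers_of_int: "of_int c \<in> ring_of_integers \<gamma>"
  unfolding ring_of_integers_def algebraic_integer_iff_algebraic_int
  using num_field_of_int by simp

lemma poly_of_int_poly_mem_ring_of_integers:
  assumes "algebraic_integer \<gamma>"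
  shows "poly (of_int_poly P) \<gamma> \<in> ring_of_integers \<gamma>"
proof (induction P)
  case (pCons c P)
  have "\<gamma> \<in> ring_of_integers \<gamma>"
    using assms num_field_generator unfolding ring_of_integers_def by simp
  thus ?case using pCons.IH
    by (simp add: of_int_hom.map_poly_pCons_hom ring_of_integers_closed ring_of_integers_of_int)
qed (simp add: ring_of_integers_of_int[of 0, simplified])

lemma mem_add_coset_iff: "w \<in> {x + y | y. y \<in> H} \<longleftrightarrow> w - x \<in> (H :: 'a :: ab_group_add set)"
  by (auto intro!: exI[of _ "w - x"])

lemma add_coset_eqI:
  fixes H :: "'a :: ab_group_add set"
  assumes diff: "\<And>x y. x \<in> H \<Longrightarrow> y \<in> H \<Longrightarrow> x - y \<in> H" and "x - x' \<in> H"
  shows "{x + y | y. y \<in> H} = {x' + y | y. y \<in> H}"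
proof -
  have "x' - x \<in> H" using diff[OF diff[OF assms(2) assms(2)] assms(2)] by simp
  hence "w - x \<in> H \<longleftrightarrow> w - x' \<in> H" for w
    using diff[of "w - x" "x' - x"] diff[of "w - x'" "x - x'"] assms(2) by auto
  thus ?thesis unfolding set_eq_iff mem_add_coset_iff by blast
qed

lemma of_nat_card_mult_mem_if_shifted_permutation:
  fixes H :: "'a :: ring_1 set"
  assumes H: "0 \<in> H" "\<And>x y. x \<in> H \<Longrightarrow> y \<in> H \<Longrightarrow> x - y \<in> H"
    and T: "finite A" "inj_on T A" "T ` A = A"
    and shift: "\<And>X. X \<in> A \<Longrightarrow> r (T X) - r X - z \<in> H"
  shows "of_nat (card A) * z \<in> H"
proof -
  have uminus: "- x \<in> H" if "x \<in> H" for x using H(2)[OF H(1) that] by simp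
  have sum_mem: "sum f B \<in> H" if "finite B" "\<And>X. X \<in> B \<Longrightarrow> f X \<in> H" for f and B :: "'b set"
    using that
  proof (induction B rule: finite_induct)
    case (insert X B)
    hence "f X - - sum f B \<in> H" by (intro H(2) uminus) simp_all
    thus ?case using insert(1,2) by simp
  qed (simp add: H(1))
  have "(\<Sum>X\<in>A. r (T X) - r X - z) \<in> H" by (rule sum_mem[OF T(1) shift])
  also have "(\<Sum>X\<in>A. r (T X) - r X - z) = - (of_nat (card A) * z)"
    using sum.reindex[OF T(2), of r] T(3) by (simp add: sum_subtractf)
  finally show ?thesis using uminus by fastforce
qed

lemma of_nat_card_cosets_mult_mem:
  fixes H S :: "'a :: ring_1 set"
  assumes H: "0 \<in> H" "\<And>x y. x \<in> H \<Longrightarrow> y \<in> H \<Longrightarrow> x - y \<in> H"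
    and S: "\<And>x. x \<in> S \<Longrightarrow> x + z \<in> S"
  shows "of_nat (card ((\<lambda>x. {x + y | y. y \<in> H}) ` S)) * z \<in> H"
proof (cases "finite ((\<lambda>x. {x + y | y. y \<in> H}) ` S)")
  case False
  thus ?thesis using H(1) by simp
next
  case True
  define C where "C = (\<lambda>x. {x + y | y. y \<in> H})"
  define CS where "CS = C ` S"
  have C_iff: "w \<in> C x \<longleftrightarrow> w - x \<in> H" for w x
    unfolding C_def by (rule mem_add_coset_iff)
  have C_eq: "C x = C x'" if "x - x' \<in> H" for x x'
    unfolding C_def using H(2) that by (rule add_coset_eqI)
  \<comment> \<open>translating chosen representatives by \<open>z\<close> permutes the cosets\<close>
  define r where "r = (\<lambda>X. SOME x. x \<in> S \<and> X = C x)"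
  have r: "r X \<in> S" "X = C (r X)" if "X \<in> CS" for X
    using someI_ex[of "\<lambda>x. x \<in> S \<and> X = C x"] that unfolding r_def CS_def by blast+
  define T where "T = (\<lambda>X. C (r X + z))"
  have T_CS: "T X \<in> CS" if "X \<in> CS" for X
    unfolding T_def CS_def using r[OF that] S by blast
  have inj: "inj_on T CS"
  proof (rule inj_onI)
    fix X Y assume XY: "X \<in> CS" "Y \<in> CS" "T X = T Y"
    have "r X + z \<in> C (r X + z)" using C_iff H(1) by simp
    hence "r X + z \<in> C (r Y + z)" using XY(3) unfolding T_def by simp
    hence "r X - r Y \<in> H" using C_iff[of "r X + z" "r Y + z"] by simp
    thus "X = Y" using r(2)[OF XY(1)] r(2)[OF XY(2)] C_eq by metis
  qed
  have shift: "r (T X) - r X - z \<in> H" if "X \<in> CS" for X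
  proof -
    have "r (T X) \<in> C (r (T X))" using C_iff H(1) by simp
    hence "r (T X) \<in> T X" using r(2)[OF T_CS[OF that]] by simp
    hence "r (T X) - (r X + z) \<in> H" using C_iff unfolding T_def by blast
    thus ?thesis by (simp add: diff_diff_eq)
  qed
  have fin: "finite CS" using True unfolding CS_def C_def .
  have "T ` CS = CS"
    using T_CS by (intro card_subset_eq[OF fin] card_image[OF inj]) blast+
  from of_nat_card_mult_mem_if_shifted_permutation[where r = r, OF H fin inj this shift]
  show ?thesis unfolding CS_def C_def .
qed

lemma order_index_mult_mem_int_order:
  assumes "z \<in> ring_of_integers \<gamma>"
  shows "of_nat (order_index \<gamma>) * z \<in> int_order \<gamma>"
proof -
  have "0 \<in> int_order \<gamma>" unfolding int_order_def by (auto intro!: exI[of _ 0])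
  moreover have "x - y \<in> int_order \<gamma>" if xy: "x \<in> int_order \<gamma>" "y \<in> int_order \<gamma>" for x y
  proof -
    obtain P Q where "x = poly (of_int_poly P) \<gamma>" "y = poly (of_int_poly Q) \<gamma>"
      using xy unfolding int_order_def by blast
    thus ?thesis unfolding int_order_def by (auto intro: exI[of _ "P - Q"] simp: hom_distribs)
  qed
  moreover have "x + z \<in> ring_of_integers \<gamma>" if "x \<in> ring_of_integers \<gamma>" for x
    using that assms by (rule ring_of_integers_closed(1))
  ultimately show ?thesis
    unfolding order_index_def by (rule of_nat_card_cosets_mult_mem)
qed

section \<open>Polynomials vanishing at \<open>\<gamma>\<close> and lifts modulo \<open>a\<close>\<close>

lemma poly_of_rat_of_int_poly:
  "poly (map_poly of_rat (map_poly rat_of_int p)) x = poly (of_int_poly p) (x :: 'a :: field_char_0)"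
  by (simp add: map_poly_map_poly o_def)

lemma irreducible_dvd_if_common_root:
  fixes p q :: "rat poly" and x :: "'a :: field_char_0"
  assumes irr: "irreducible p"
    and roots: "poly (map_poly of_rat p) x = 0" "poly (map_poly of_rat q) x = 0"
  shows "p dvd q"
proof -
  define d where "d = gcd p q"
  have "d = fst (bezout_coefficients p q) * p + snd (bezout_coefficients p q) * q"
    unfolding d_def by (simp add: bezout_coefficients_fst_snd)
  hence root_d: "poly (map_poly of_rat d) x = 0"
    using roots by (simp add: hom_distribs)
  have "\<not> is_unit d"
  proof
    assume "is_unit d"
    then obtain c where "d = [:c:]" "c \<noteq> 0"
      by (metis is_unit_field_poly degree_0_id pCons_eq_0_iff)
    thus False using root_d by (simp add: hom_distribs)
  qed
  hence "p dvd d" using irreducibleD'[OF irr gcd_dvd1[of p q]] unfolding d_def by blast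
  thus ?thesis unfolding d_def using dvd_trans gcd_dvd2 by blast
qed

lemma monic_int_poly_dvd_if_rat_dvd:
  fixes f P :: "int poly"
  assumes monic: "lead_coeff f = 1" and dvd: "map_poly rat_of_int f dvd map_poly rat_of_int P"
  shows "f dvd P"
proof -
  obtain Q R where div: "pseudo_divmod P f = (Q, R)" by fastforce
  have f0: "f \<noteq> 0" using monic by auto
  have PQR: "P = f * Q + R" using pseudo_divmod(1)[OF f0 div] monic by simp
  have "R = 0"
  proof (rule ccontr)
    assume "R \<noteq> 0"
    hence "degree R < degree f" using pseudo_divmod(2)[OF f0 div] by simp
    moreover have "map_poly rat_of_int f dvd map_poly rat_of_int R"
      using dvd unfolding PQR by (simp add: hom_distribs dvd_add_right_iff)
    hence "degree (map_poly rat_of_int f) \<le> degree (map_poly rat_of_int R)"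
      using \<open>R \<noteq> 0\<close> by (intro dvd_imp_degree_le) simp_all
    ultimately show False by simp
  qed
  thus ?thesis using PQR by simp
qed

lemma monic_irreducible_dvd_if_root:
  fixes f P :: "int poly" and \<gamma> :: "'a :: field_char_0"
  assumes "lead_coeff f = 1" "irreducible (map_poly rat_of_int f)"
    and "poly (of_int_poly f) \<gamma> = 0" "poly (of_int_poly P) \<gamma> = 0"
  shows "f dvd P"
  using assms
  by (intro monic_int_poly_dvd_if_rat_dvd irreducible_dvd_if_common_root[of _ \<gamma>])
    (simp_all add: poly_of_rat_of_int_poly)

lemma reduction_lift_exists:
  assumes "\<forall>i. coprime (snd (quotient_of (coeff g i))) a"
  shows "\<exists>G. reduction_lift a g G"
proof -
  define r where "r = (\<lambda>i. fst (quotient_of (coeff g i)))"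
  define s where "s = (\<lambda>i. snd (quotient_of (coeff g i)))"
  have "\<exists>u. [s i * u = 1] (mod a)" for i
    using assms unfolding s_def by (intro cong_solve_coprime_int) simp
  then obtain u where u: "\<And>i. [s i * u i = 1] (mod a)" by metis
  define G where "G = Poly (map (\<lambda>i. r i * u i) [0..<Suc (degree g)])"
  have "[coeff G i * s i = r i] (mod a)" for i
  proof (cases "i \<le> degree g")
    case True
    hence "coeff G i * s i = r i * (s i * u i)"
      unfolding G_def by (simp add: nth_default_def del: upt_Suc)
    also have "[\<dots> = r i * 1] (mod a)" by (intro cong_mult cong_refl u)
    finally show ?thesis by simp
  next
    case False
    thus ?thesis unfolding G_def r_def s_def by (simp add: nth_default_def coeff_eq_0)
  qed
  thus ?thesis unfolding reduction_lift_def r_def s_def by blast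
qed

lemma reduction_lift_diff_scaled:
  fixes g :: "rat poly" and G :: "int poly"
  assumes a: "a \<noteq> 0" and denoms: "\<forall>i. coprime (snd (quotient_of (coeff g i))) a"
    and lift: "reduction_lift a g G"
  obtains S H where "coprime S a"
    "map_poly of_int H = Polynomial.smult (of_int S / of_int a) (map_poly of_int G - g)"
proof -
  define r where "r = (\<lambda>i. fst (quotient_of (coeff g i)))"
  define s where "s = (\<lambda>i. snd (quotient_of (coeff g i)))"
  have quot: "quotient_of (coeff g i) = (r i, s i)" for i
    unfolding r_def s_def by simp
  have g_coeff: "coeff g i = of_int (r i) / of_int (s i)" for i
    by (rule quotient_of_div[OF quot])
  have s_pos: "s i > 0" for i
    by (rule quotient_of_denom_pos[OF quot])
  define t where "t i = (coeff G i * s i - r i) div a" for i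
  have "a dvd coeff G i * s i - r i" for i
    using lift unfolding reduction_lift_def r_def s_def cong_iff_dvd_diff by (metis dvd_diff_commute)
  hence t: "coeff G i * s i - r i = a * t i" for i unfolding t_def by simp
  define S where "S = (\<Prod>i\<le>degree g. s i)"
  have "coprime S a" unfolding S_def using denoms unfolding s_def by (intro prod_coprime_left) simp
  have s_dvd: "s i dvd S" for i
  proof (cases "i \<le> degree g")
    case True thus ?thesis unfolding S_def by (intro dvd_prodI) auto
  next
    case False thus ?thesis unfolding s_def by (simp add: coeff_eq_0)
  qed
  \<comment> \<open>the coefficients of \<open>G - g\<close> are \<open>a t\<^sub>i / s\<^sub>i\<close>, so \<open>S / a\<close> clears all denominators\<close>
  have "coeff (Polynomial.smult (of_int S / of_int a) (map_poly of_int G - g)) i \<in> \<int>" for i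
  proof -
    have "of_int S = (of_int (S div s i) * of_int (s i) :: rat)"
      using s_dvd[of i] by (simp flip: of_int_mult)
    moreover have "of_int (coeff G i) - of_int (r i) / of_int (s i) = of_int (a * t i) / (of_int (s i) :: rat)"
      using s_pos[of i] t[of i] by (simp add: field_simps flip: of_int_mult of_int_diff)
    ultimately have "coeff (Polynomial.smult (of_int S / of_int a) (map_poly of_int G - g)) i
        = of_int (S div s i * t i)"
      using a s_pos[of i] by (simp add: g_coeff field_simps)
    thus ?thesis by simp
  qed
  then obtain H where "Polynomial.smult (of_int S / of_int a) (map_poly of_int G - g) = map_poly of_int H"
    by (rule intpolyE)
  with \<open>coprime S a\<close> show ?thesis by (metis that)
qed

lemma mem_ring_of_integers_if_coprime_multiples:
  assumes "coprime S a" "of_int S * \<beta> \<in> ring_of_integers \<gamma>" "of_int a * \<beta> \<in> ring_of_integers \<gamma>"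
  shows "\<beta> \<in> ring_of_integers \<gamma>"
proof -
  obtain u v where "u * S + v * a = 1"
    using assms(1) by (metis bezout_coefficients_fst_snd coprime_imp_gcd_eq_1)
  hence "\<beta> = of_int (u * S + v * a) * \<beta>" by simp
  also have "\<dots> = of_int u * (of_int S * \<beta>) + of_int v * (of_int a * \<beta>)"
    by (simp add: algebra_simps)
  also have "\<dots> \<in> ring_of_integers \<gamma>"
    using assms(2,3) ring_of_integers_closed(1) ring_of_integers_closed(3)[OF ring_of_integers_of_int]
    by blast
  finally show ?thesis .
qed

lemma reduction_lift_eval:
  assumes "algebraic_integer \<gamma>" "a \<noteq> 0" "\<alpha> \<in> ring_of_integers \<gamma>"
    and "poly (map_poly of_rat g) \<gamma> = \<alpha>"
    and "\<forall>i. coprime (snd (quotient_of (coeff g i))) a"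
    and "reduction_lift a g G"
  obtains \<beta> where "\<beta> \<in> ring_of_integers \<gamma>" "poly (of_int_poly G) \<gamma> = \<alpha> + of_int a * \<beta>"
proof -
  obtain S H where S: "coprime S a"
    and H: "map_poly of_int H = Polynomial.smult (of_int S / of_int a) (map_poly of_int G - g)"
    by (rule reduction_lift_diff_scaled[OF assms(2,5,6)])
  define \<beta> where "\<beta> = (poly (of_int_poly G) \<gamma> - \<alpha>) / of_int a"
  have a_\<beta>: "of_int a * \<beta> = poly (of_int_poly G) \<gamma> - \<alpha>"
    unfolding \<beta>_def using assms(2) by simp
  have "poly (of_int_poly H) \<gamma> = poly (map_poly of_rat (map_poly of_int H)) \<gamma>"
    by (rule poly_of_rat_of_int_poly[symmetric])
  also have "\<dots> = of_rat (of_int S / of_int a) * (poly (of_int_poly G) \<gamma> - \<alpha>)"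
    unfolding H assms(4)[symmetric]
    by (simp only: of_rat_hom.map_poly_hom_smult of_rat_poly_hom.hom_minus poly_smult poly_diff
        poly_of_rat_of_int_poly)
  also have "\<dots> = of_int S * \<beta>"
    unfolding \<beta>_def by (simp add: of_rat_divide)
  finally have "poly (of_int_poly H) \<gamma> = of_int S * \<beta>" .
  hence "of_int S * \<beta> \<in> ring_of_integers \<gamma>"
    using poly_of_int_poly_mem_ring_of_integers[OF assms(1), of H] by simp
  moreover have "of_int a * \<beta> \<in> ring_of_integers \<gamma>"
    unfolding a_\<beta> using poly_of_int_poly_mem_ring_of_integers[OF assms(1)] assms(3)
    by (rule ring_of_integers_closed(2))
  ultimately have "\<beta> \<in> ring_of_integers \<gamma>"
    by (rule mem_ring_of_integers_if_coprime_multiples[OF S])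
  thus ?thesis using a_\<beta> that by simp
qed

section \<open>The integers in \<open>a \<O>\<^sub>K + \<alpha> \<O>\<^sub>K\<close>\<close>

lemma multiples_eq_iff:
  fixes m m' :: int
  assumes "m > 0" "m' > 0"
  shows "{k * m | k. True} = {k * m' | k. True} \<longleftrightarrow> m = m'"
proof
  assume eq: "{k * m | k. True} = {k * m' | k. True}"
  have "m \<in> {k * m | k. True}" "m' \<in> {k * m' | k. True}"
    by (auto intro!: exI[of _ 1])
  hence "m \<in> {k * m' | k. True}" "m' \<in> {k * m | k. True}" using eq by blast+
  hence "m' dvd m" "m dvd m'" by (auto simp: dvd_def mult.commute)
  thus "m = m'" using assms by (simp add: zdvd_antisym_nonneg)
qed simp

lemma int_ideal_eq_multiples:
  fixes J :: "int set"
  assumes a: "a > 0" "a \<in> J"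
    and diff: "\<And>c d. c \<in> J \<Longrightarrow> d \<in> J \<Longrightarrow> c - d \<in> J"
    and mult: "\<And>c k. c \<in> J \<Longrightarrow> k * c \<in> J"
  obtains m where "m > 0" "m dvd a" "J = {k * m | k. True}"
proof -
  define P where "P = (\<lambda>n :: nat. n > 0 \<and> int n \<in> J)"
  define m where "m = int (LEAST n. P n)"
  have "P (nat a)" unfolding P_def using a by simp
  hence "P (LEAST n. P n)" by (rule LeastI)
  hence m: "m > 0" "m \<in> J" unfolding m_def P_def by simp_all
  have least: "\<not> P n" if "int n < m" for n
    using not_less_Least[of n P] that unfolding m_def by simp
  have J: "J = {k * m | k. True}"
  proof (intro subset_antisym subsetI)
    fix c assume "c \<in> J"
    hence "c mod m \<in> J" using diff[OF _ mult[OF m(2)], of c "c div m"] by (simp add: minus_div_mult_eq_mod)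
    moreover have "0 \<le> c mod m" "c mod m < m" using m(1) by simp_all
    ultimately have "c mod m = 0" using least[of "nat (c mod m)"] unfolding P_def by fastforce
    thus "c \<in> {k * m | k. True}" by (auto intro: exI[of _ "c div m"])
  next
    fix c assume "c \<in> {k * m | k. True}"
    thus "c \<in> J" using mult[OF m(2)] by auto
  qed
  moreover have "m dvd a" using a(2) unfolding J by auto
  ultimately show ?thesis using m(1) that by blast
qed

lemma gen_ideal_mod_eq_multiples:
  fixes a m :: int
  assumes "m dvd a"
  shows "gen_ideal_mod a m = {k * m | k. True}"
proof (intro subset_antisym subsetI)
  fix c assume "c \<in> gen_ideal_mod a m"
  then obtain k t where "c - k * m = a * t"
    unfolding gen_ideal_mod_def cong_iff_dvd_diff by (auto elim: dvdE)
  moreover obtain a' where "a = m * a'" using assms by blast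
  ultimately have "c = (k + a' * t) * m" by (simp add: algebra_simps)
  thus "c \<in> {k * m | k. True}" by blast
next
  fix c assume "c \<in> {k * m | k. True}"
  thus "c \<in> gen_ideal_mod a m" unfolding gen_ideal_mod_def by (blast intro: cong_refl)
qed

lemma ideal_min_eqI:
  assumes "m > 0" "{n. of_int n \<in> I} = {k * m | k. True}"
  shows "ideal_min I = m"
  unfolding ideal_min_def using assms multiples_eq_iff by (intro the_equality) auto

lemma two_gen_ideal_int_part:
  assumes "a > 0"
  obtains m where "m > 0" "m dvd a" "{c. of_int c \<in> two_gen_ideal \<gamma> a \<alpha>} = {k * m | k. True}"
proof (rule int_ideal_eq_multiples)
  show "a > 0" by (fact assms)
  have "of_int a = of_int a * of_int 1 + \<alpha> * of_int 0" by simp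
  thus "a \<in> {c. of_int c \<in> two_gen_ideal \<gamma> a \<alpha>}"
    unfolding two_gen_ideal_def using ring_of_integers_of_int by blast
next
  fix c d assume "c \<in> {c. of_int c \<in> two_gen_ideal \<gamma> a \<alpha>}" "d \<in> {c. of_int c \<in> two_gen_ideal \<gamma> a \<alpha>}"
  then obtain x y x' y' where
    "x \<in> ring_of_integers \<gamma>" "y \<in> ring_of_integers \<gamma>" "of_int c = of_int a * x + \<alpha> * y"
    "x' \<in> ring_of_integers \<gamma>" "y' \<in> ring_of_integers \<gamma>" "of_int d = of_int a * x' + \<alpha> * y'"
    unfolding two_gen_ideal_def by auto
  moreover from this have "of_int (c - d) = of_int a * (x - x') + \<alpha> * (y - y')"
    by (simp add: algebra_simps)
  ultimately show "c - d \<in> {c. of_int c \<in> two_gen_ideal \<gamma> a \<alpha>}"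
    unfolding two_gen_ideal_def using ring_of_integers_closed(2) by blast
next
  fix c k assume "c \<in> {c. of_int c \<in> two_gen_ideal \<gamma> a \<alpha>}"
  then obtain x y where "x \<in> ring_of_integers \<gamma>" "y \<in> ring_of_integers \<gamma>" "of_int c = of_int a * x + \<alpha> * y"
    unfolding two_gen_ideal_def by auto
  moreover from this have "of_int (k * c) = of_int a * (of_int k * x) + \<alpha> * (of_int k * y)"
    by (simp add: algebra_simps)
  ultimately show "k * c \<in> {c. of_int c \<in> two_gen_ideal \<gamma> a \<alpha>}"
    unfolding two_gen_ideal_def using ring_of_integers_closed(3)[OF ring_of_integers_of_int] by blast
qed

lemma coeff_cong_imp_eq_add_smult:
  fixes P Q :: "int poly"
  assumes "\<forall>i. [coeff P i = coeff Q i] (mod a)"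
  obtains W where "P = Q + Polynomial.smult a W"
proof
  have "a dvd coeff (P - Q) i" for i using assms by (simp add: cong_iff_dvd_diff dvd_diff_commute)
  thus "P = Q + Polynomial.smult a (map_poly (\<lambda>c. c div a) (P - Q))"
    by (intro poly_eqI) (simp add: coeff_map_poly algebra_simps)
qed

lemma rres_mod_memI:
  fixes U V G f E :: "int poly"
  assumes lift: "reduction_lift a g G"
    and eq: "U * G + V * f = [:t * c:] + Polynomial.smult a E"
    and inverse: "[s * t = 1] (mod a)"
  shows "c \<in> rres_mod a g f"
proof -
  have uv: "Polynomial.smult s U * G + Polynomial.smult s V * f
      = Polynomial.smult s ([:t * c:] + Polynomial.smult a E)"
    using eq by (metis mult_smult_left smult_add_right)
  have coeff: "coeff (Polynomial.smult s ([:t * c:] + Polynomial.smult a E)) i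
      = s * t * coeff [:c:] i + a * (s * coeff E i)" for i
    by (simp add: coeff_pCons algebra_simps split: nat.split)
  have "[s * t * d + a * (s * e) = 1 * d + 0] (mod a)" for d e
    by (intro cong_add cong_mult inverse cong_refl) (simp add: cong_def)
  hence "[coeff (Polynomial.smult s U * G + Polynomial.smult s V * f) i = coeff [:c:] i] (mod a)" for i
    unfolding uv coeff by simp
  thus ?thesis unfolding rres_mod_def using lift by blast
qed

lemma rres_mod_subset_two_gen_ideal:
  assumes "algebraic_integer \<gamma>" "a \<noteq> 0" "\<alpha> \<in> ring_of_integers \<gamma>"
    and "poly (map_poly of_rat g) \<gamma> = \<alpha>"
    and "\<forall>i. coprime (snd (quotient_of (coeff g i))) a"
    and "poly (of_int_poly f) \<gamma> = 0"
    and "c \<in> rres_mod a g f"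
  shows "of_int c \<in> two_gen_ideal \<gamma> a \<alpha>"
proof -
  obtain G u v where lift: "reduction_lift a g G"
    and "\<forall>i. [coeff (u * G + v * f) i = coeff [:c:] i] (mod a)"
    using assms(7) unfolding rres_mod_def by blast
  then obtain w where uvw: "u * G + v * f = [:c:] + Polynomial.smult a w"
    by (elim coeff_cong_imp_eq_add_smult)
  obtain \<beta> where \<beta>: "\<beta> \<in> ring_of_integers \<gamma>" "poly (of_int_poly G) \<gamma> = \<alpha> + of_int a * \<beta>"
    using reduction_lift_eval[OF assms(1-5) lift] .
  let ?ev = "\<lambda>P. poly (of_int_poly P) \<gamma>"
  have "?ev u * ?ev G + ?ev v * ?ev f = of_int c + of_int a * ?ev w"
    using arg_cong[OF uvw, of ?ev] by (simp add: hom_distribs)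
  hence "of_int c = ?ev u * (\<alpha> + of_int a * \<beta>) - of_int a * ?ev w"
    unfolding assms(6) \<beta>(2) by simp
  hence "of_int c = of_int a * (?ev u * \<beta> - ?ev w) + \<alpha> * ?ev u"
    by (simp add: algebra_simps)
  moreover have "?ev u \<in> ring_of_integers \<gamma>" "?ev w \<in> ring_of_integers \<gamma>"
    by (simp_all add: poly_of_int_poly_mem_ring_of_integers[OF assms(1)])
  moreover from this have "?ev u * \<beta> - ?ev w \<in> ring_of_integers \<gamma>"
    using \<beta>(1) by (intro ring_of_integers_closed(2,3))
  ultimately show ?thesis unfolding two_gen_ideal_def by blast
qed

lemma two_gen_ideal_subset_rres_mod:
  assumes gamma_int: "algebraic_integer \<gamma>"
    and f_monic: "lead_coeff f = 1"
    and f_irred: "irreducible (map_poly rat_of_int f)"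
    and f_root: "poly (of_int_poly f) \<gamma> = 0"
    and a_nonzero: "a \<noteq> 0"
    and alpha_int: "\<alpha> \<in> ring_of_integers \<gamma>"
    and coprime_index: "coprime a (int (order_index \<gamma>))"
    and g_alpha: "poly (map_poly of_rat g) \<gamma> = \<alpha>"
    and g_denoms: "\<forall>i. coprime (snd (quotient_of (coeff g i))) a"
    and c: "of_int c \<in> two_gen_ideal \<gamma> a \<alpha>"
  shows "c \<in> rres_mod a g f"
proof -
  let ?ev = "\<lambda>P. poly (of_int_poly P) \<gamma>"
  define N where "N = int (order_index \<gamma>)"
  obtain x y where xy: "x \<in> ring_of_integers \<gamma>" "y \<in> ring_of_integers \<gamma>"
    and cxy: "of_int c = of_int a * x + \<alpha> * y"
    using c unfolding two_gen_ideal_def by auto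
  obtain G where lift: "reduction_lift a g G" using reduction_lift_exists[OF g_denoms] ..
  obtain \<beta> where \<beta>: "\<beta> \<in> ring_of_integers \<gamma>" "?ev G = \<alpha> + of_int a * \<beta>"
    using reduction_lift_eval[OF gamma_int a_nonzero alpha_int g_alpha g_denoms lift] .
  \<comment> \<open>multiplying by the index moves \<open>x\<close>, \<open>y\<close>, \<open>\<beta>\<close> into \<open>\<int>[\<gamma>]\<close>\<close>
  obtain X Y B where XYB: "of_int N * x = ?ev X" "of_int N * y = ?ev Y" "of_int N * \<beta> = ?ev B"
    using order_index_mult_mem_int_order[OF xy(1)] order_index_mult_mem_int_order[OF xy(2)]
      order_index_mult_mem_int_order[OF \<beta>(1)]
    unfolding int_order_def N_def by auto
  define E where "E = B * Y - Polynomial.smult N X"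
  define P where "P = [:N^2 * c:] + Polynomial.smult a E - Polynomial.smult N Y * G"
  have "of_int (N^2) * of_int c = of_int N * ?ev Y * ?ev G - of_int a * (?ev B * ?ev Y - of_int N * ?ev X)"
    unfolding XYB[symmetric] \<beta>(2) cxy by (simp add: algebra_simps power2_eq_square)
  hence "?ev P = 0" unfolding P_def E_def by (simp add: hom_distribs)
  then obtain W where "P = f * W"
    using monic_irreducible_dvd_if_root[OF f_monic f_irred f_root] by blast
  hence "Polynomial.smult N Y * G + W * f = [:N^2 * c:] + Polynomial.smult a E"
    unfolding P_def by (simp add: algebra_simps)
  moreover obtain s where "[s * N^2 = 1] (mod a)"
    using coprime_index unfolding N_def
    by (metis cong_solve_coprime_int coprime_commute coprime_power_left_iff mult.commute)
  ultimately show ?thesis by (rule rres_mod_memI[OF lift])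
qed

theorem lemma8p3:
  fixes \<gamma> \<alpha> :: complex and f :: "int poly" and g :: "rat poly" and a :: int
  assumes gamma_int: "algebraic_integer \<gamma>"
    and f_monic: "lead_coeff f = 1"
    and f_irred: "irreducible (map_poly rat_of_int f)"
    and f_root: "poly (map_poly of_int f) \<gamma> = 0"
    and a_pos: "a > 0"
    and alpha_int: "\<alpha> \<in> ring_of_integers \<gamma>"
    and coprime_index: "coprime a (int (order_index \<gamma>))"
    and g_alpha: "poly (map_poly of_rat g) \<gamma> = \<alpha>"
    and g_denoms: "\<forall>i. coprime (snd (quotient_of (coeff g i))) a"
  shows "ideal_min (two_gen_ideal \<gamma> a \<alpha>) > 0
      \<and> ideal_min (two_gen_ideal \<gamma> a \<alpha>) dvd a
      \<and> rres_mod a g f = gen_ideal_mod a (ideal_min (two_gen_ideal \<gamma> a \<alpha>))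
      \<and> (\<forall>m. m > 0 \<and> m dvd a \<and> rres_mod a g f = gen_ideal_mod a m
              \<longrightarrow> m = ideal_min (two_gen_ideal \<gamma> a \<alpha>))"
proof -
  let ?I = "two_gen_ideal \<gamma> a \<alpha>"
  have a_nonzero: "a \<noteq> 0" using a_pos by simp
  obtain m where m: "m > 0" "m dvd a" and int_part: "{c. of_int c \<in> ?I} = {k * m | k. True}"
    using two_gen_ideal_int_part[OF a_pos] .
  have min: "ideal_min ?I = m" using ideal_min_eqI[OF m(1) int_part] .
  have "rres_mod a g f = {c. of_int c \<in> ?I}"
    using rres_mod_subset_two_gen_ideal[OF gamma_int a_nonzero alpha_int g_alpha g_denoms f_root]
      two_gen_ideal_subset_rres_mod[OF gamma_int f_monic f_irred f_root a_nonzero alpha_int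
        coprime_index g_alpha g_denoms]
    by blast
  hence rres: "rres_mod a g f = gen_ideal_mod a m"
    unfolding int_part gen_ideal_mod_eq_multiples[OF m(2)] .
  have "m' = m" if "m' > 0" "m' dvd a" "rres_mod a g f = gen_ideal_mod a m'" for m'
    using that m rres multiples_eq_iff gen_ideal_mod_eq_multiples by metis
  thus ?thesis unfolding min using m rres by blast
qed

end
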